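(* Any probability density $p$ on $\mathbb R$ of bounded total variation can be represented as a convex mixture of uniform densities, i.e. there is a Borel probability measure $\pi$ on the half-plane $\{(a,b)\in\mathbb R^2:b>a\}$ such that $$p(x)=\int\frac{1}{b-a}1_{\{a<x<b\}}\,d\pi(a,b)\quad\text{for a.e. }x,$$ and moreover $$\|p\|_{TV}=\int\|q_{a,b}\|_{TV}\,d\pi(a,b)=2\int\frac{1}{b-a}\,d\pi(a,b),$$ where $q_{a,b}=\frac1{b-a}1_{(a,b)}$.
   Context: $\|p\|_{TV}=\sup\sum_{k=1}^n|p(x_k)-p(x_{k-1})|$ over finite $x_0<\dots<x_n$, with the convention that each $p(x)$ lies in the closed segment between $p(x-)$ and $p(x+)$. *)

theory Defs
  imports "HOL-Probability.Probability"
begin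

definition total_variation :: "(real \<Rightarrow> real) \<Rightarrow> ennreal" where
  "total_variation f =
     (SUP xs \<in> {(n, x). \<forall>k<n. x k < x (Suc k)}.
        ennreal (\<Sum>k\<in>{1..fst xs}. \<bar>f (snd xs k) - f (snd xs (k - 1))\<bar>))"

definition tv_normalized :: "(real \<Rightarrow> real) \<Rightarrow> bool" where
  "tv_normalized f \<longleftrightarrow> (\<forall>x. \<exists>l r. (f \<longlongrightarrow> l) (at_left x) \<and> (f \<longlongrightarrow> r) (at_right x)
       \<and> min l r \<le> f x \<and> f x \<le> max l r)"

definition unif_dens :: "real \<Rightarrow> real \<Rightarrow> real \<Rightarrow> real" where
  "unif_dens a b x = indicator {a<..<b} x / (b - a)"

end

theory Submission
  imports Defs
begin

text \<open>
  The proof follows a Jordan-type decomposition.  Write p = P - N with P the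
  "positive variation up to x" (the supremum of p(t_0) plus the positive increments
  of p along chains ending before x) and N = P - p; both are nondecreasing.  For a
  level s between inf P and sup P let a(s) and b(s) be the generalised inverses of P
  and N at s.  At every common continuity point x of P and N (all but countably many x)
  the levels s with a(s) < x < b(s) form an interval of length P(x) - N(x) = p(x).
  Hence pushing the measure (b(s) - a(s)) ds forward along s \<mapsto> (a(s), b(s)) gives a
  probability measure \<pi> with p(x) = \<integral> 1/(b-a) 1{a<x<b} d\<pi> almost everywhere.

  The total variation identities follow from a chain of inequalities:
  TV(p) \<le> \<integral> TV(q_{a,b}) d\<pi> holds for every such mixture representation of a normalised
  function (evaluating variation sums on a co-countable set suffices, by the
  normalisation convention); TV(q_{a,b}) \<le> 2/(b-a); and 2 \<integral> 1/(b-a) d\<pi> is at most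
  twice the length of the range of levels, which is bounded by TV(p).
\<close>


definition increasing_chain :: "nat \<Rightarrow> (nat \<Rightarrow> real) \<Rightarrow> bool" where
  "increasing_chain n t \<longleftrightarrow> (\<forall>k<n. t k < t (Suc k))"

definition variation_sum :: "(real \<Rightarrow> real) \<Rightarrow> nat \<Rightarrow> (nat \<Rightarrow> real) \<Rightarrow> real" where
  "variation_sum f n t = (\<Sum>k\<in>{1..n}. \<bar>f (t k) - f (t (k - 1))\<bar>)"

lemma variation_sum_le_total_variation:
  "increasing_chain n t \<Longrightarrow> ennreal (variation_sum f n t) \<le> total_variation f"
  unfolding total_variation_def
  by (rule SUP_upper2[where i="(n, t)"]) (auto simp: increasing_chain_def variation_sum_def)

lemma total_variation_leI:
  "(\<And>n t. increasing_chain n t \<Longrightarrow> ennreal (variation_sum f n t) \<le> B) \<Longrightarrow> total_variation f \<le> B"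
  unfolding total_variation_def
  by (rule SUP_least) (auto simp: increasing_chain_def variation_sum_def)

lemma variation_sum_nonneg: "variation_sum f n t \<ge> 0"
  unfolding variation_sum_def by (rule sum_nonneg) simp

lemma increment_le_total_variation:
  assumes "x < y"
  shows "ennreal \<bar>f y - f x\<bar> \<le> total_variation f"
proof -
  define t where "t = (\<lambda>k::nat. if k = 0 then x else y)"
  have "increasing_chain 1 t" using assms by (simp add: increasing_chain_def t_def)
  from variation_sum_le_total_variation[OF this, of f] show ?thesis
    by (simp add: variation_sum_def t_def)
qed

lemma sum_telescope_from_1:
  fixes g :: "nat \<Rightarrow> 'a::ab_group_add"
  shows "(\<Sum>k\<in>{1..n}. g k - g (k - 1)) = g n - g 0"
  by (induction n) (auto simp: algebra_simps)

lemma increasing_chain_mono: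
  assumes "increasing_chain n t" "i \<le> j" "j \<le> n"
  shows "t i \<le> t j"
  using assms(2,3)
proof (induction j)
  case (Suc j)
  show ?case
  proof (cases "i = Suc j")
    case False
    then have "t i \<le> t j" using Suc by auto
    also have "t j < t (Suc j)" using assms(1) Suc(3) unfolding increasing_chain_def by auto
    finally show ?thesis by simp
  qed simp
qed simp


section \<open>Total variation of a uniform density\<close>

lemma variation_sum_scale: "variation_sum (\<lambda>x. c * f x) n t = \<bar>c\<bar> * variation_sum f n t"
  unfolding variation_sum_def by (simp add: sum_distrib_left flip: abs_mult right_diff_distrib)

lemma variation_sum_diff_mono_le:
  assumes g: "mono g" and h: "mono h" and t: "increasing_chain n t"
  shows "variation_sum (\<lambda>x. g x - h x) n t \<le> (g (t n) - g (t 0)) + (h (t n) - h (t 0))"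
proof -
  have "variation_sum (\<lambda>x. g x - h x) n t
      \<le> (\<Sum>k\<in>{1..n}. (g (t k) - g (t (k - 1))) + (h (t k) - h (t (k - 1))))"
    unfolding variation_sum_def
  proof (rule sum_mono)
    fix k assume "k \<in> {1..n}"
    then have "t (k - 1) \<le> t k" using increasing_chain_mono[OF t, of "k - 1" k] by auto
    then have "g (t (k - 1)) \<le> g (t k)" "h (t (k - 1)) \<le> h (t k)" using g h by (auto dest: monoD)
    then show "\<bar>g (t k) - h (t k) - (g (t (k - 1)) - h (t (k - 1)))\<bar>
        \<le> (g (t k) - g (t (k - 1))) + (h (t k) - h (t (k - 1)))" by linarith
  qed
  also have "\<dots> = (g (t n) - g (t 0)) + (h (t n) - h (t 0))"
    using sum_telescope_from_1[of "\<lambda>k. g (t k)" n] sum_telescope_from_1[of "\<lambda>k. h (t k)" n]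
    by (simp add: sum.distrib)
  finally show ?thesis .
qed

lemma unif_dens_step_difference:
  assumes "a < b"
  shows "unif_dens a b = (\<lambda>x. (1 / (b - a)) * (indicator {a<..} x - indicator {b..} x))"
  using assms by (auto simp: unif_dens_def indicator_def fun_eq_iff)

lemma unif_dens_nonneg: "unif_dens a b x \<ge> 0"
  by (cases "a < b") (auto simp: unif_dens_def indicator_def)

lemma unif_dens_measurable: "(\<lambda>z. unif_dens (fst z) (snd z) x) \<in> borel_measurable borel"
proof -
  have "(\<lambda>z. unif_dens (fst z) (snd z) x) \<in> borel_measurable (borel \<Otimes>\<^sub>M borel)"
    unfolding unif_dens_def indicator_def greaterThanLessThan_iff by measurable
  then show ?thesis by (simp add: borel_prod)
qed

lemma inverse_length_measurable:
  "(\<lambda>z. ennreal (1 / (snd z - fst z))) \<in> borel_measurable (borel :: (real \<times> real) measure)"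
proof -
  have "(\<lambda>z::real \<times> real. ennreal (1 / (snd z - fst z))) \<in> borel_measurable (borel \<Otimes>\<^sub>M borel)"
    by measurable
  then show ?thesis by (simp add: borel_prod)
qed

lemma ennreal_mult_inverse: "c > 0 \<Longrightarrow> ennreal c * ennreal (1 / c) = 1"
  by (simp flip: ennreal_mult)

lemma total_variation_unif_dens_le:
  assumes ab: "a < b"
  shows "total_variation (unif_dens a b) \<le> ennreal (2 / (b - a))"
proof (rule total_variation_leI, rule ennreal_leI)
  fix n t assume t: "increasing_chain n t"
  define g h :: "real \<Rightarrow> real" where "g = indicator {a<..}" and "h = indicator {b..}"
  have mono: "mono g" "mono h" by (auto simp: g_def h_def mono_def indicator_def)
  have "variation_sum (unif_dens a b) n t = \<bar>1 / (b - a)\<bar> * variation_sum (\<lambda>x. g x - h x) n t"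
    by (simp only: unif_dens_step_difference[OF ab] variation_sum_scale g_def h_def)
  also have "\<dots> = (1 / (b - a)) * variation_sum (\<lambda>x. g x - h x) n t"
    using ab by simp
  also have "\<dots> \<le> (1 / (b - a)) * ((g (t n) - g (t 0)) + (h (t n) - h (t 0)))"
    using variation_sum_diff_mono_le[OF mono t] ab by (intro mult_left_mono) auto
  also have "\<dots> \<le> (1 / (b - a)) * 2"
    using ab by (intro mult_left_mono) (auto simp: g_def h_def indicator_def)
  finally show "variation_sum (unif_dens a b) n t \<le> 2 / (b - a)" by simp
qed


section \<open>Variation sums along chains avoiding a countable set\<close>

text \<open>For a normalised function, every variation sum is approximated by variation sums
  along chains inside any co-countable set G: each point t_k is replaced by a point
  just left and a point just right of it, both in G.\<close>

lemma left_limit_approx: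
  fixes f :: "real \<Rightarrow> real"
  assumes "(f \<longlongrightarrow> l) (at_left x)" "c < x" "e > 0" "countable (- G)"
  shows "\<exists>y\<in>G. c < y \<and> y < x \<and> \<bar>f y - l\<bar> < e"
proof -
  have "eventually (\<lambda>y. dist (f y) l < e) (at_left x)" using tendstoD assms(1,3) by blast
  then obtain b where b: "b < x" "\<forall>y>b. y < x \<longrightarrow> dist (f y) l < e"
    by (auto simp: eventually_at_left_field)
  have "uncountable {max b c<..<x}" using b assms by (simp add: uncountable_open_interval)
  then have "\<not> {max b c<..<x} \<subseteq> - G" using countable_subset assms(4) by blast
  then obtain y where "y \<in> G" "y \<in> {max b c<..<x}" by blast
  then show ?thesis using b by (intro bexI[of _ y]) (auto simp: dist_real_def)
qed

lemma right_limit_approx: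
  fixes f :: "real \<Rightarrow> real"
  assumes "(f \<longlongrightarrow> r) (at_right x)" "x < c" "e > 0" "countable (- G)"
  shows "\<exists>y\<in>G. x < y \<and> y < c \<and> \<bar>f y - r\<bar> < e"
proof -
  have "eventually (\<lambda>y. dist (f y) r < e) (at_right x)" using tendstoD assms(1,3) by blast
  then obtain b where b: "b > x" "\<forall>y>x. y < b \<longrightarrow> dist (f y) r < e"
    by (auto simp: eventually_at_right_field)
  have "uncountable {x<..<min b c}" using b assms by (simp add: uncountable_open_interval)
  then have "\<not> {x<..<min b c} \<subseteq> - G" using countable_subset assms(4) by blast
  then obtain y where "y \<in> G" "y \<in> {x<..<min b c}" by blast
  then show ?thesis using b by (intro bexI[of _ y]) (auto simp: dist_real_def)
qed

lemma tv_normalizedE: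
  assumes "tv_normalized f"
  obtains L R where "\<And>x. (f \<longlongrightarrow> L x) (at_left x)" "\<And>x. (f \<longlongrightarrow> R x) (at_right x)"
    "\<And>x. min (L x) (R x) \<le> f x" "\<And>x. f x \<le> max (L x) (R x)"
proof -
  have "\<forall>x. \<exists>l r. (f \<longlongrightarrow> l) (at_left x) \<and> (f \<longlongrightarrow> r) (at_right x) \<and> min l r \<le> f x \<and> f x \<le> max l r"
    using assms by (simp add: tv_normalized_def)
  then obtain L R where "\<forall>x. (f \<longlongrightarrow> L x) (at_left x) \<and> (f \<longlongrightarrow> R x) (at_right x)
      \<and> min (L x) (R x) \<le> f x \<and> f x \<le> max (L x) (R x)" by metis
  then show ?thesis using that by blast
qed

text \<open>The first lemma carries the extra boundary term needed for the induction.\<close>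
lemma segment_chain_bound_with_tail:
  fixes v L R :: "nat \<Rightarrow> real"
  assumes "\<forall>k\<le>n. min (L k) (R k) \<le> v k \<and> v k \<le> max (L k) (R k)"
  shows "(\<Sum>k\<in>{1..n}. \<bar>v k - v (k - 1)\<bar>) + \<bar>R n - v n\<bar>
      \<le> (\<Sum>k\<le>n. \<bar>R k - L k\<bar>) + (\<Sum>k\<in>{1..n}. \<bar>L k - R (k - 1)\<bar>)"
  using assms
proof (induction n)
  case 0
  then show ?case by (auto simp: min_def max_def split: if_splits)
next
  case (Suc n)
  then have IH: "(\<Sum>k\<in>{1..n}. \<bar>v k - v (k - 1)\<bar>) + \<bar>R n - v n\<bar>
      \<le> (\<Sum>k\<le>n. \<bar>R k - L k\<bar>) + (\<Sum>k\<in>{1..n}. \<bar>L k - R (k - 1)\<bar>)" by auto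
  have between: "\<bar>v (Suc n) - L (Suc n)\<bar> + \<bar>R (Suc n) - v (Suc n)\<bar> = \<bar>R (Suc n) - L (Suc n)\<bar>"
    using Suc.prems[rule_format, of "Suc n"] by (auto simp: min_def max_def split: if_splits)
  have "\<bar>v (Suc n) - v n\<bar> \<le> \<bar>v (Suc n) - L (Suc n)\<bar> + \<bar>L (Suc n) - R n\<bar> + \<bar>R n - v n\<bar>"
    by linarith
  then show ?case using IH between by simp
qed

lemma segment_chain_bound:
  fixes v L R :: "nat \<Rightarrow> real"
  assumes "\<forall>k\<le>n. min (L k) (R k) \<le> v k \<and> v k \<le> max (L k) (R k)"
  shows "(\<Sum>k\<in>{1..n}. \<bar>v k - v (k - 1)\<bar>) \<le> (\<Sum>k\<le>n. \<bar>R k - L k\<bar>) + (\<Sum>k\<in>{1..n}. \<bar>L k - R (k - 1)\<bar>)"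
  using segment_chain_bound_with_tail[OF assms] by linarith

definition interleave :: "(nat \<Rightarrow> real) \<Rightarrow> (nat \<Rightarrow> real) \<Rightarrow> nat \<Rightarrow> real" where
  "interleave Y Z j = (if even j then Y (j div 2) else Z (j div 2))"

lemma interleave_even [simp]: "interleave Y Z (2 * k) = Y k"
  by (simp add: interleave_def)

lemma interleave_odd [simp]: "interleave Y Z (Suc (2 * k)) = Z k"
  by (simp add: interleave_def)

lemma variation_sum_interleave:
  "variation_sum f (Suc (2 * n)) (interleave Y Z)
     = (\<Sum>k\<le>n. \<bar>f (Z k) - f (Y k)\<bar>) + (\<Sum>k\<in>{1..n}. \<bar>f (Y k) - f (Z (k - 1))\<bar>)"
proof (induction n)
  case 0
  then show ?case by (simp add: variation_sum_def interleave_def)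
next
  case (Suc n)
  have Y: "interleave Y Z (Suc (Suc (2 * n))) = Y (Suc n)"
    using interleave_even[of Y Z "Suc n"] by (simp del: interleave_even)
  have Z: "interleave Y Z (Suc (Suc (Suc (2 * n)))) = Z (Suc n)"
    using interleave_odd[of Y Z "Suc n"] by (simp del: interleave_odd)
  have "variation_sum f (Suc (2 * Suc n)) (interleave Y Z) = variation_sum f (Suc (2 * n)) (interleave Y Z)
     + \<bar>f (Y (Suc n)) - f (Z n)\<bar> + \<bar>f (Z (Suc n)) - f (Y (Suc n))\<bar>"
    by (simp add: variation_sum_def Y Z)
  then show ?case unfolding Suc.IH by simp
qed

lemma increasing_chain_interleave:
  assumes "\<forall>k\<le>n. Y k < Z k" "\<forall>k<n. Z k < Y (Suc k)"
  shows "increasing_chain (Suc (2 * n)) (interleave Y Z)"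
  unfolding increasing_chain_def
proof (intro allI impI)
  fix j assume j: "j < Suc (2 * n)"
  show "interleave Y Z j < interleave Y Z (Suc j)"
  proof (cases "even j")
    case True
    then obtain k where "j = 2 * k" by (auto elim: evenE)
    then show ?thesis using assms(1) j by simp
  next
    case False
    then obtain k where k: "j = Suc (2 * k)" by (auto elim: oddE)
    then have "Suc j = 2 * Suc k" by simp
    then show ?thesis using assms(2) j k by (auto simp: interleave_def)
  qed
qed

lemma interleaving_approximation:
  fixes f :: "real \<Rightarrow> real"
  assumes L: "\<And>x. (f \<longlongrightarrow> L x) (at_left x)" and R: "\<And>x. (f \<longlongrightarrow> R x) (at_right x)"
    and G: "countable (- G)" and t: "increasing_chain n t" and e: "e > 0"
  obtains Y Z where "increasing_chain (Suc (2 * n)) (interleave Y Z)"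
    "\<forall>j\<le>Suc (2 * n). interleave Y Z j \<in> G"
    "\<And>k. k \<le> n \<Longrightarrow> \<bar>f (Y k) - L (t k)\<bar> < e" "\<And>k. k \<le> n \<Longrightarrow> \<bar>f (Z k) - R (t k)\<bar> < e"
proof -
  define lo where "lo k = (if k = 0 then t 0 - 1 else (t (k - 1) + t k) / 2)" for k
  define hi where "hi k = (if k < n then (t k + t (Suc k)) / 2 else t n + 1)" for k
  have step: "k < n \<Longrightarrow> t k < t (Suc k)" for k using t by (simp add: increasing_chain_def)
  have lo: "k \<le> n \<Longrightarrow> lo k < t k" for k
    using step[of "k - 1"] by (cases k) (auto simp: lo_def)
  have hi: "k \<le> n \<Longrightarrow> t k < hi k" for k using step[of k] by (auto simp: hi_def)
  have "\<forall>k. \<exists>y. k \<le> n \<longrightarrow> y \<in> G \<and> lo k < y \<and> y < t k \<and> \<bar>f y - L (t k)\<bar> < e"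
    using left_limit_approx[OF L lo e G] by blast
  then obtain Y where Y: "\<And>k. k \<le> n \<Longrightarrow> Y k \<in> G \<and> lo k < Y k \<and> Y k < t k \<and> \<bar>f (Y k) - L (t k)\<bar> < e"
    by metis
  have "\<forall>k. \<exists>z. k \<le> n \<longrightarrow> z \<in> G \<and> t k < z \<and> z < hi k \<and> \<bar>f z - R (t k)\<bar> < e"
    using right_limit_approx[OF R hi e G] by blast
  then obtain Z where Z: "\<And>k. k \<le> n \<Longrightarrow> Z k \<in> G \<and> t k < Z k \<and> Z k < hi k \<and> \<bar>f (Z k) - R (t k)\<bar> < e"
    by metis
  have "Z k < Y (Suc k)" if "k < n" for k
    using Z[of k] Y[of "Suc k"] that by (simp add: hi_def lo_def)
  then have "increasing_chain (Suc (2 * n)) (interleave Y Z)"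
    using Y Z by (intro increasing_chain_interleave) force+
  moreover have "\<forall>j\<le>Suc (2 * n). interleave Y Z j \<in> G"
  proof (intro allI impI)
    fix j assume "j \<le> Suc (2 * n)"
    then have "j div 2 \<le> n" by linarith
    then show "interleave Y Z j \<in> G" using Y Z by (simp add: interleave_def)
  qed
  ultimately show ?thesis using that Y Z by blast
qed

lemma variation_sum_approx_cocountable:
  assumes norm: "tv_normalized f" and G: "countable (- G)" and t: "increasing_chain n t" and e: "e > 0"
  shows "\<exists>m u. increasing_chain m u \<and> (\<forall>j\<le>m. u j \<in> G) \<and> variation_sum f n t \<le> variation_sum f m u + e"
proof -
  obtain L R where L: "\<And>x. (f \<longlongrightarrow> L x) (at_left x)" and R: "\<And>x. (f \<longlongrightarrow> R x) (at_right x)"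
    and between: "\<And>x. min (L x) (R x) \<le> f x" "\<And>x. f x \<le> max (L x) (R x)"
    using tv_normalizedE[OF norm] by blast
  define d where "d = e / (4 * real n + 2)"
  have d: "d > 0" "(4 * real n + 2) * d = e" using e by (auto simp: d_def)
  obtain Y Z where chain: "increasing_chain (Suc (2 * n)) (interleave Y Z)"
    and inG: "\<forall>j\<le>Suc (2 * n). interleave Y Z j \<in> G"
    and Y: "\<And>k. k \<le> n \<Longrightarrow> \<bar>f (Y k) - L (t k)\<bar> < d"
    and Z: "\<And>k. k \<le> n \<Longrightarrow> \<bar>f (Z k) - R (t k)\<bar> < d"
    using interleaving_approximation[OF L R G t d(1)] by blast
  have "variation_sum f n t \<le> (\<Sum>k\<le>n. \<bar>R (t k) - L (t k)\<bar>) + (\<Sum>k\<in>{1..n}. \<bar>L (t k) - R (t (k - 1))\<bar>)"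
    unfolding variation_sum_def using between by (intro segment_chain_bound) blast
  also have "\<dots> \<le> (\<Sum>k\<le>n. \<bar>f (Z k) - f (Y k)\<bar> + 2 * d) + (\<Sum>k\<in>{1..n}. \<bar>f (Y k) - f (Z (k - 1))\<bar> + 2 * d)"
  proof (intro add_mono sum_mono)
    fix k assume "k \<in> {..n}"
    then show "\<bar>R (t k) - L (t k)\<bar> \<le> \<bar>f (Z k) - f (Y k)\<bar> + 2 * d"
      using Y[of k] Z[of k] by auto
  next
    fix k assume "k \<in> {1..n}"
    then have "\<bar>f (Y k) - L (t k)\<bar> < d" "\<bar>f (Z (k - 1)) - R (t (k - 1))\<bar> < d"
      using Y[of k] Z[of "k - 1"] by auto
    then show "\<bar>L (t k) - R (t (k - 1))\<bar> \<le> \<bar>f (Y k) - f (Z (k - 1))\<bar> + 2 * d"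
      by linarith
  qed
  also have "\<dots> = variation_sum f (Suc (2 * n)) (interleave Y Z) + e"
    unfolding variation_sum_interleave d(2)[symmetric] by (simp add: sum.distrib algebra_simps)
  finally show ?thesis using chain inG by blast
qed


lemma variation_sum_mixture_le:
  fixes Q :: "'a \<Rightarrow> real \<Rightarrow> real"
  assumes Q_meas: "\<And>x. (\<lambda>z. Q z x) \<in> borel_measurable M" and Q_nonneg: "\<And>z x. Q z x \<ge> 0"
    and f_nonneg: "\<And>x. f x \<ge> 0"
    and rep: "\<And>x. x \<in> G \<Longrightarrow> ennreal (f x) = (\<integral>\<^sup>+z. ennreal (Q z x) \<partial>M)"
    and u: "increasing_chain m u" "\<forall>j\<le>m. u j \<in> G"
  shows "ennreal (variation_sum f m u) \<le> (\<integral>\<^sup>+z. total_variation (Q z) \<partial>M)"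
proof -
  have int: "integrable M (\<lambda>z. Q z (u j))" and eq: "f (u j) = (\<integral>z. Q z (u j) \<partial>M)" if "j \<le> m" for j
  proof -
    have r: "ennreal (f (u j)) = (\<integral>\<^sup>+z. ennreal (Q z (u j)) \<partial>M)" using rep u(2) that by blast
    show i: "integrable M (\<lambda>z. Q z (u j))"
      using r[symmetric] by (intro integrableI_nonneg) (auto simp: Q_meas Q_nonneg)
    have "ennreal (f (u j)) = ennreal (\<integral>z. Q z (u j) \<partial>M)"
      using r nn_integral_eq_integral[OF i] Q_nonneg by simp
    then show "f (u j) = (\<integral>z. Q z (u j) \<partial>M)" using f_nonneg Q_nonneg by (simp add: integral_nonneg)
  qed
  have int_step: "integrable M (\<lambda>z. \<bar>Q z (u k) - Q z (u (k - 1))\<bar>)" if "k \<in> {1..m}" for k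
    using int[of k] int[of "k - 1"] that by auto
  then have int_sum: "integrable M (\<lambda>z. variation_sum (Q z) m u)"
    unfolding variation_sum_def by (intro Bochner_Integration.integrable_sum) blast
  have "variation_sum f m u = (\<Sum>k\<in>{1..m}. \<bar>\<integral>z. Q z (u k) - Q z (u (k - 1)) \<partial>M\<bar>)"
    unfolding variation_sum_def by (rule sum.cong) (auto simp: eq int)
  also have "\<dots> \<le> (\<Sum>k\<in>{1..m}. \<integral>z. \<bar>Q z (u k) - Q z (u (k - 1))\<bar> \<partial>M)"
    by (intro sum_mono integral_abs_bound)
  also have "\<dots> = (\<integral>z. variation_sum (Q z) m u \<partial>M)"
    unfolding variation_sum_def using int_step by (simp add: Bochner_Integration.integral_sum)
  finally have "ennreal (variation_sum f m u) \<le> ennreal (\<integral>z. variation_sum (Q z) m u \<partial>M)"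
    by (rule ennreal_leI)
  also have "\<dots> = (\<integral>\<^sup>+z. ennreal (variation_sum (Q z) m u) \<partial>M)"
    using int_sum by (simp add: nn_integral_eq_integral variation_sum_nonneg)
  also have "\<dots> \<le> (\<integral>\<^sup>+z. total_variation (Q z) \<partial>M)"
    by (intro nn_integral_mono variation_sum_le_total_variation u(1))
  finally show ?thesis .
qed

lemma total_variation_le_mixture:
  fixes Q :: "'a \<Rightarrow> real \<Rightarrow> real"
  assumes Q_meas: "\<And>x. (\<lambda>z. Q z x) \<in> borel_measurable M" and Q_nonneg: "\<And>z x. Q z x \<ge> 0"
    and f_nonneg: "\<And>x. f x \<ge> 0"
    and rep: "\<And>x. x \<in> G \<Longrightarrow> ennreal (f x) = (\<integral>\<^sup>+z. ennreal (Q z x) \<partial>M)"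
    and G: "countable (- G)" and norm: "tv_normalized f"
  shows "total_variation f \<le> (\<integral>\<^sup>+z. total_variation (Q z) \<partial>M)"
proof (rule total_variation_leI, rule ennreal_le_epsilon)
  fix n t and e :: real assume t: "increasing_chain n t" and e: "0 < e"
  obtain m u where u: "increasing_chain m u" "\<forall>j\<le>m. u j \<in> G" "variation_sum f n t \<le> variation_sum f m u + e"
    using variation_sum_approx_cocountable[OF norm G t e] by blast
  have "ennreal (variation_sum f n t) \<le> ennreal (variation_sum f m u) + ennreal e"
    using u(3) e variation_sum_nonneg[of f m u] by (simp flip: ennreal_plus add: ennreal_leI)
  also have "\<dots> \<le> (\<integral>\<^sup>+z. total_variation (Q z) \<partial>M) + ennreal e"
    using variation_sum_mixture_le[OF Q_meas Q_nonneg f_nonneg rep u(1,2)] by (rule add_right_mono)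
  finally show "ennreal (variation_sum f n t) \<le> (\<integral>\<^sup>+z. total_variation (Q z) \<partial>M) + ennreal e" .
qed


definition pos_variation_sum :: "(real \<Rightarrow> real) \<Rightarrow> nat \<Rightarrow> (nat \<Rightarrow> real) \<Rightarrow> real" where
  "pos_variation_sum f n t = f (t 0) + (\<Sum>k\<in>{1..n}. max 0 (f (t k) - f (t (k - 1))))"

lemma two_pos_variation_sum:
  "2 * pos_variation_sum f n t = f (t 0) + f (t n) + variation_sum f n t"
proof -
  have "2 * (\<Sum>k\<in>{1..n}. max 0 (f (t k) - f (t (k - 1))))
      = (\<Sum>k\<in>{1..n}. \<bar>f (t k) - f (t (k - 1))\<bar> + (f (t k) - f (t (k - 1))))"
    by (simp add: sum_distrib_left) (rule sum.cong; simp add: max_def abs_if)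
  also have "\<dots> = variation_sum f n t + (f (t n) - f (t 0))"
    using sum_telescope_from_1[of "\<lambda>k. f (t k)" n] by (simp add: sum.distrib variation_sum_def)
  finally show ?thesis unfolding pos_variation_sum_def by simp
qed

lemma chain_extend_right:
  assumes t: "increasing_chain n t" and x: "t n \<le> x"
  obtains m u where "increasing_chain m u" "u m = x" "u 0 = t 0"
    "pos_variation_sum f m u = pos_variation_sum f n t + max 0 (f x - f (t n))"
    "variation_sum f m u = variation_sum f n t + \<bar>f x - f (t n)\<bar>"
proof (cases "t n = x")
  case True
  then show ?thesis using that t by auto
next
  case False
  define u where "u = t(Suc n := x)"
  have u: "u (Suc n) = x" "u n = t n" "u 0 = t 0" by (auto simp: u_def)
  have sums: "(\<Sum>k\<in>{1..n}. g (u k) (u (k - 1))) = (\<Sum>k\<in>{1..n}. g (t k) (t (k - 1)))"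
    for g :: "real \<Rightarrow> real \<Rightarrow> real"
    by (rule sum.cong) (auto simp: u_def)
  show ?thesis
  proof (rule that)
    show "increasing_chain (Suc n) u"
      using t x False by (auto simp: increasing_chain_def u_def less_Suc_eq)
    show "pos_variation_sum f (Suc n) u = pos_variation_sum f n t + max 0 (f x - f (t n))"
      using sums[of "\<lambda>a b. max 0 (f a - f b)"] by (simp add: pos_variation_sum_def u sum.cl_ivl_Suc)
    show "variation_sum f (Suc n) u = variation_sum f n t + \<bar>f x - f (t n)\<bar>"
      using sums[of "\<lambda>a b. \<bar>f a - f b\<bar>"] by (simp add: variation_sum_def u sum.cl_ivl_Suc)
  qed (use u in auto)
qed

lemma chain_extend_left:
  assumes t: "increasing_chain n t" and z: "z < t 0"
  shows "increasing_chain (Suc n) (\<lambda>k. if k = 0 then z else t (k - 1))"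
    and "variation_sum f (Suc n) (\<lambda>k. if k = 0 then z else t (k - 1)) = \<bar>f (t 0) - f z\<bar> + variation_sum f n t"
  using assms by (auto simp: increasing_chain_def less_Suc_eq_0_disj)
    (induction n; simp add: variation_sum_def)


section \<open>Generalised inverses of monotone functions\<close>

definition quantile :: "(real \<Rightarrow> real) \<Rightarrow> real \<Rightarrow> real" where
  "quantile F s = Inf {x. s \<le> F x}"

lemma bdd_below_superlevel:
  fixes F :: "real \<Rightarrow> real"
  assumes F: "mono F" and below: "F x0 < s"
  shows "bdd_below {x. s \<le> F x}"
proof (rule bdd_belowI)
  fix y assume y: "y \<in> {x. s \<le> F x}"
  show "x0 \<le> y"
  proof (rule ccontr)
    assume "\<not> x0 \<le> y"
    then have "F y \<le> F x0" using monoD[OF F, of y x0] by simp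
    with below y show False by simp
  qed
qed

lemma quantile_le:
  assumes "mono F" "F x0 < s" "s \<le> F x"
  shows "quantile F s \<le> x"
  unfolding quantile_def
  by (rule cInf_lower) (use assms(3) bdd_below_superlevel[OF assms(1,2)] in auto)

lemma quantile_less_imp:
  assumes F: "mono F" and below: "F x0 < s" and above: "s \<le> F x1" and q: "quantile F s < x"
  shows "s \<le> F x"
proof -
  have "{x. s \<le> F x} \<noteq> {}" using above by blast
  moreover have "Inf {x. s \<le> F x} < x" using q by (simp add: quantile_def)
  ultimately obtain y where "y \<in> {x. s \<le> F x}" "y < x"
    using cInf_less_iff[of "{x. s \<le> F x}"] bdd_below_superlevel[OF F below] by blast
  then show ?thesis using monoD[OF F, of y x] by simp
qed

lemma quantile_less_of_isCont:
  assumes F: "mono F" and below: "F x0 < s" and c: "isCont F x" and less: "s < F x"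
  shows "quantile F s < x"
proof -
  have "eventually (\<lambda>y. s < F y) (at x)"
    using c less unfolding isCont_def by (rule order_tendstoD(1))
  then obtain d where "d > 0" and d: "\<And>y. y \<noteq> x \<Longrightarrow> dist y x < d \<Longrightarrow> s < F y"
    by (auto simp: eventually_at)
  then have "quantile F s \<le> x - d / 2"
    by (intro quantile_le[OF F below] less_imp_le d) (auto simp: dist_real_def)
  with \<open>d > 0\<close> show ?thesis by simp
qed

lemma less_quantile_of_isCont:
  assumes F: "mono F" and above: "s \<le> F x1" and c: "isCont F x" and less: "F x < s"
  shows "x < quantile F s"
proof -
  have "eventually (\<lambda>y. F y < s) (at x)"
    using c less unfolding isCont_def by (rule order_tendstoD(2))
  then obtain d where "d > 0" and d: "\<And>y. y \<noteq> x \<Longrightarrow> dist y x < d \<Longrightarrow> F y < s"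
    by (auto simp: eventually_at)
  have "x + d / 2 \<le> y" if "s \<le> F y" for y
  proof (rule ccontr)
    assume "\<not> x + d / 2 \<le> y"
    then have "F y \<le> F (x + d / 2)" using monoD[OF F, of y "x + d / 2"] by simp
    moreover have "F (x + d / 2) < s" using d \<open>d > 0\<close> by (simp add: dist_real_def)
    ultimately show False using that by simp
  qed
  then have "x + d / 2 \<le> quantile F s"
    unfolding quantile_def by (intro cInf_greatest) (use above in auto)
  with \<open>d > 0\<close> show ?thesis by simp
qed

lemma mono_on_quantile:
  assumes F: "mono F" and S: "\<And>s. s \<in> S \<Longrightarrow> (\<exists>x. F x < s) \<and> (\<exists>x. s \<le> F x)"
  shows "mono_on S (quantile F)"
proof (rule mono_onI)
  fix r s assume "r \<in> S" "s \<in> S" "r \<le> s"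
  obtain x0 where "F x0 < r" using S[OF \<open>r \<in> S\<close>] by blast
  obtain x1 where "s \<le> F x1" using S[OF \<open>s \<in> S\<close>] by blast
  show "quantile F r \<le> quantile F s" unfolding quantile_def
    by (rule cInf_superset_mono)
      (use \<open>r \<le> s\<close> \<open>s \<le> F x1\<close> bdd_below_superlevel[OF F \<open>F x0 < r\<close>] in auto)
qed

lemma borel_measurable_mono_on_if:
  fixes q :: "real \<Rightarrow> real"
  assumes "mono_on S q" "S \<in> sets borel"
  shows "(\<lambda>s. if s \<in> S then q s else 0) \<in> borel_measurable borel"
  using borel_measurable_mono_on_fnc[OF assms(1)] assms(2)
  by (subst (asm) measurable_restrict_space_iff) auto


section \<open>Jordan decomposition of a density of bounded variation\<close>

text \<open>A probability density of bounded variation.\<close>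
locale bv_density =
  fixes p :: "real \<Rightarrow> real"
  assumes nonneg: "\<And>x. p x \<ge> 0"
    and total: "(\<integral>\<^sup>+ x. ennreal (p x) \<partial>lborel) = 1"
    and bv: "total_variation p < \<infinity>"
begin

definition TV :: real where "TV = enn2real (total_variation p)"

lemma TV_nonneg: "TV \<ge> 0"
  by (simp add: TV_def)

lemma total_variation_eq_TV: "total_variation p = ennreal TV"
  using bv unfolding TV_def by (simp add: ennreal_enn2real less_top)

lemma variation_sum_le_TV: "increasing_chain n t \<Longrightarrow> variation_sum p n t \<le> TV"
  using variation_sum_le_total_variation[of n t p] total_variation_eq_TV TV_nonneg
  by (simp add: ennreal_le_iff)

lemma p_le: "p y \<le> p 0 + TV"
proof -
  have "ennreal \<bar>p y - p 0\<bar> \<le> ennreal TV"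
  proof (cases y "0::real" rule: linorder_cases)
    case less
    then show ?thesis
      using increment_le_total_variation[of y 0 p] by (simp add: total_variation_eq_TV abs_minus_commute)
  next
    case greater
    then show ?thesis using increment_le_total_variation[of 0 y p] by (simp add: total_variation_eq_TV)
  qed (simp add: TV_nonneg)
  then show ?thesis using TV_nonneg by (simp add: ennreal_le_iff)
qed

text \<open>A density of total mass one cannot stay above e on an interval of length 2/e;
  so p takes arbitrarily small values arbitrarily far to the left and to the right.\<close>
lemma not_large_on_interval:
  assumes e: "e > 0" and large: "\<And>x. x \<in> {l..l + 2/e} \<Longrightarrow> e \<le> p x"
  shows False
proof -
  have "(\<integral>\<^sup>+ x. ennreal e * indicator {l..l + 2/e} x \<partial>lborel) \<le> (\<integral>\<^sup>+ x. ennreal (p x) \<partial>lborel)"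
    using large by (intro nn_integral_mono) (auto simp: indicator_def intro: ennreal_leI)
  then have "ennreal e * ennreal (2 / e) \<le> 1" using e total by (simp add: nn_integral_cmult_indicator)
  then have "ennreal 2 \<le> 1" using e by (simp add: ennreal_mult[symmetric])
  then show False by simp
qed

lemma small_right: "e > 0 \<Longrightarrow> \<exists>x\<ge>M. p x < e"
  using not_large_on_interval[of e M] by (metis atLeastAtMost_iff not_less)

lemma small_left: "e > 0 \<Longrightarrow> \<exists>x\<le>M. p x < e"
  using not_large_on_interval[of e "M - 2/e"] by (metis atLeastAtMost_iff diff_add_cancel not_less)

definition pos_var :: "real \<Rightarrow> real" where
  "pos_var x = Sup {pos_variation_sum p n t | n t. increasing_chain n t \<and> t n \<le> x}"

definition neg_var :: "real \<Rightarrow> real" where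
  "neg_var x = pos_var x - p x"

lemma pos_variation_sum_bounded:
  assumes "increasing_chain n t"
  shows "pos_variation_sum p n t \<le> 2 * p 0 + 3 * TV"
  using two_pos_variation_sum[of p n t] p_le[of "t 0"] p_le[of "t n"] variation_sum_le_TV[OF assms]
    nonneg[of "t 0"] nonneg[of "t n"] nonneg[of 0] TV_nonneg by linarith

lemma pos_var_ge: "increasing_chain n t \<Longrightarrow> t n \<le> x \<Longrightarrow> pos_variation_sum p n t \<le> pos_var x"
  unfolding pos_var_def
  by (rule cSup_upper) (auto simp: bdd_above_def intro: pos_variation_sum_bounded)

lemma pos_var_le: "(\<And>n t. increasing_chain n t \<Longrightarrow> t n \<le> x \<Longrightarrow> pos_variation_sum p n t \<le> c) \<Longrightarrow> pos_var x \<le> c"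
  unfolding pos_var_def
  by (rule cSup_least) (auto intro!: exI[of _ 0] exI[of _ "\<lambda>_. x"] simp: increasing_chain_def)

lemma p_le_pos_var: "p x \<le> pos_var x"
  using pos_var_ge[of 0 "\<lambda>_. x" x] by (simp add: increasing_chain_def pos_variation_sum_def)

lemma pos_var_nonneg: "pos_var x \<ge> 0"
  using p_le_pos_var[of x] nonneg[of x] by linarith

lemma neg_var_le_pos_var: "neg_var x \<le> pos_var x"
  using nonneg[of x] by (simp add: neg_var_def)

lemma pos_var_bounded: "pos_var x \<le> 2 * p 0 + 3 * TV"
  by (rule pos_var_le) (rule pos_variation_sum_bounded)

lemma mono_pos_var: "mono pos_var"
proof (rule monoI)
  fix x y :: real assume "x \<le> y"
  then show "pos_var x \<le> pos_var y" by (intro pos_var_le pos_var_ge) auto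
qed

text \<open>Monotonicity of neg_var: a chain ending before x, extended by x and then y, gains
  at least p(y) - p(x) in positive variation.\<close>
lemma mono_neg_var: "mono neg_var"
proof (rule monoI)
  fix x y :: real assume xy: "x \<le> y"
  have "pos_var x \<le> pos_var y - p y + p x"
  proof (rule pos_var_le)
    fix n t assume t: "increasing_chain n t" "t n \<le> x"
    obtain m u where u: "increasing_chain m u" "u m = x" "u 0 = t 0"
        "pos_variation_sum p m u = pos_variation_sum p n t + max 0 (p x - p (t n))"
        "variation_sum p m u = variation_sum p n t + \<bar>p x - p (t n)\<bar>"
      by (rule chain_extend_right[OF t])
    have "u m \<le> y" using u(2) xy by simp
    then obtain m' u' where u': "increasing_chain m' u'" "u' m' = y" "u' 0 = u 0"
        "pos_variation_sum p m' u' = pos_variation_sum p m u + max 0 (p y - p (u m))"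
        "variation_sum p m' u' = variation_sum p m u + \<bar>p y - p (u m)\<bar>"
      by (rule chain_extend_right[OF u(1)])
    have "pos_variation_sum p m' u' \<le> pos_var y" using pos_var_ge[OF u'(1)] u'(2) by simp
    then show "pos_variation_sum p n t \<le> pos_var y - p y + p x" using u(2,4) u'(4) by simp
  qed
  then show "neg_var x \<le> neg_var y" by (simp add: neg_var_def)
qed

text \<open>Prepending a point far to the left where p is small shows 2 pos_var(x) \<le> TV + p(x).\<close>
lemma two_pos_var_le: assumes e: "e > 0" shows "2 * pos_var x \<le> TV + p x + e"
proof -
  have "pos_var x \<le> (TV + p x + e) / 2"
  proof (rule pos_var_le)
    fix n t assume t: "increasing_chain n t" "t n \<le> x"
    obtain m u where u: "increasing_chain m u" "u m = x" "u 0 = t 0"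
        "pos_variation_sum p m u = pos_variation_sum p n t + max 0 (p x - p (t n))"
        "variation_sum p m u = variation_sum p n t + \<bar>p x - p (t n)\<bar>"
      by (rule chain_extend_right[OF t])
    obtain z where z: "z \<le> t 0 - 1" "p z < e" using small_left[OF e] by blast
    have "\<bar>p (t 0) - p z\<bar> + variation_sum p n t + \<bar>p x - p (t n)\<bar> \<le> TV"
      using variation_sum_le_TV[OF chain_extend_left(1)[OF u(1), of z]] z u(3,5)
        chain_extend_left(2)[OF u(1), of z p] by simp
    then have "p (t 0) + p (t n) + variation_sum p n t \<le> TV + p x + e" using z(2) by linarith
    then show "pos_variation_sum p n t \<le> (TV + p x + e) / 2"
      using two_pos_variation_sum[of p n t] by simp
  qed
  then show ?thesis by simp
qed

definition pv_sup :: real where "pv_sup = Sup (range pos_var)"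
definition pv_inf :: real where "pv_inf = Inf (range pos_var)"

lemma pos_var_le_pv_sup: "pos_var x \<le> pv_sup"
  unfolding pv_sup_def using pos_var_bounded by (intro cSup_upper) (auto simp: bdd_above_def)

lemma pv_inf_le_pos_var: "pv_inf \<le> pos_var x"
  unfolding pv_inf_def using pos_var_nonneg by (intro cInf_lower) (auto simp: bdd_below_def)

lemma pv_inf_nonneg: "pv_inf \<ge> 0"
  unfolding pv_inf_def using pos_var_nonneg by (intro cInf_greatest) auto

lemma pv_inf_le_pv_sup: "pv_inf \<le> pv_sup"
  using pv_inf_le_pos_var[of 0] pos_var_le_pv_sup[of 0] by simp

lemma two_pv_sup_le_TV: "2 * pv_sup \<le> TV"
proof -
  have "2 * pos_var x \<le> TV" for x
  proof (rule field_le_epsilon)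
    fix e :: real assume e: "e > 0"
    obtain y where y: "y \<ge> x" "p y < e / 2" using small_right[of "e/2" x] e by auto
    have "2 * pos_var x \<le> 2 * pos_var y" using monoD[OF mono_pos_var y(1)] by simp
    also have "\<dots> \<le> TV + p y + e / 2" using two_pos_var_le[of "e/2" y] e by simp
    finally show "2 * pos_var x \<le> TV + e" using y(2) by simp
  qed
  then have "pos_var x \<le> TV / 2" for x by (simp add: field_simps)
  then have "pv_sup \<le> TV / 2" unfolding pv_sup_def by (intro cSup_least) auto
  then show ?thesis by simp
qed

lemma pv_inf_le_neg_var: "pv_inf \<le> neg_var x"
proof (rule field_le_epsilon)
  fix e :: real assume e: "e > 0"
  obtain y where y: "y \<le> x" "p y < e" using small_left[OF e] by blast
  have "pv_inf \<le> neg_var y + e" using pv_inf_le_pos_var[of y] y(2) by (simp add: neg_var_def)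
  also have "neg_var y \<le> neg_var x" using monoD[OF mono_neg_var y(1)] .
  finally show "pv_inf \<le> neg_var x + e" by simp
qed


definition levels :: "real set" where "levels = {pv_inf<..<pv_sup}"

lemma levels_crossed:
  assumes "s \<in> levels"
  shows "(\<exists>x. pos_var x < s) \<and> (\<exists>x. s \<le> pos_var x) \<and> (\<exists>x. neg_var x < s) \<and> (\<exists>x. s \<le> neg_var x)"
proof -
  have s: "pv_inf < s" "s < pv_sup" using assms by (auto simp: levels_def)
  obtain x0 where x0: "pos_var x0 < s"
    using cInf_lessD[of "range pos_var" s] s(1) unfolding pv_inf_def by auto
  obtain x1 where x1: "(s + pv_sup) / 2 < pos_var x1"
    using less_cSupD[of "range pos_var" "(s + pv_sup) / 2"] s(2) unfolding pv_sup_def by auto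
  obtain y where y: "y \<ge> x1" "p y < (pv_sup - s) / 2" using small_right[of "(pv_sup - s)/2" x1] s by auto
  have y_above: "s < neg_var y" using monoD[OF mono_pos_var y(1)] x1 y(2) by (simp add: neg_var_def)
  show ?thesis
  proof (intro conjI)
    show "\<exists>x. pos_var x < s" using x0 by blast
    show "\<exists>x. s \<le> pos_var x" using y_above neg_var_le_pos_var[of y] by (intro exI[of _ y]) simp
    show "\<exists>x. neg_var x < s" using x0 neg_var_le_pos_var[of x0] by (intro exI[of _ x0]) simp
    show "\<exists>x. s \<le> neg_var x" using y_above by (intro exI[of _ y]) simp
  qed
qed

definition left_end :: "real \<Rightarrow> real" where
  "left_end s = (if s \<in> levels then quantile pos_var s else 0)"

definition right_end :: "real \<Rightarrow> real" where
  "right_end s = (if s \<in> levels then quantile neg_var s else 0)"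

lemma levels_borel [measurable]: "levels \<in> sets borel"
  by (simp add: levels_def)

lemma left_end_measurable [measurable]: "left_end \<in> borel_measurable borel"
  unfolding left_end_def[abs_def] using levels_crossed
  by (intro borel_measurable_mono_on_if mono_on_quantile mono_pos_var) auto

lemma right_end_measurable [measurable]: "right_end \<in> borel_measurable borel"
  unfolding right_end_def[abs_def] using levels_crossed
  by (intro borel_measurable_mono_on_if mono_on_quantile mono_neg_var) auto

text \<open>Both variation functions are monotone, so they are continuous off a countable set.\<close>
definition continuity_points :: "real set" where
  "continuity_points = {x. isCont pos_var x \<and> isCont neg_var x}"

lemma countable_discontinuities: "countable (- continuity_points)"
proof -
  have "- continuity_points = {x. \<not> isCont pos_var x} \<union> {x. \<not> isCont neg_var x}"
    by (auto simp: continuity_points_def)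
  then show ?thesis using mono_ctble_discont[OF mono_pos_var] mono_ctble_discont[OF mono_neg_var] by simp
qed

definition covering_levels :: "real \<Rightarrow> real set" where
  "covering_levels x = {s\<in>levels. left_end s < x \<and> x < right_end s}"

lemma covering_levels_measurable [measurable]: "covering_levels x \<in> sets borel"
  unfolding covering_levels_def by measurable

lemma covering_levels_subset: "covering_levels x \<subseteq> {neg_var x<..pos_var x}"
proof
  fix s assume "s \<in> covering_levels x"
  then have sL: "s \<in> levels" and a: "quantile pos_var s < x" and b: "x < quantile neg_var s"
    by (auto simp: covering_levels_def left_end_def right_end_def)
  obtain x0 x1 x2 where x0: "pos_var x0 < s" and x1: "s \<le> pos_var x1" and x2: "neg_var x2 < s"
    using levels_crossed[OF sL] by blast
  have "s \<le> pos_var x" using quantile_less_imp[OF mono_pos_var x0 x1 a] .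
  moreover have "neg_var x < s"
  proof (rule ccontr)
    assume "\<not> neg_var x < s"
    then have "quantile neg_var s \<le> x" by (intro quantile_le[OF mono_neg_var x2]) simp
    with b show False by simp
  qed
  ultimately show "s \<in> {neg_var x<..pos_var x}" by simp
qed

lemma covering_levels_supset:
  assumes x: "x \<in> continuity_points"
  shows "{neg_var x<..<pos_var x} \<subseteq> covering_levels x"
proof
  fix s assume s: "s \<in> {neg_var x<..<pos_var x}"
  have cont: "isCont pos_var x" "isCont neg_var x" using x by (auto simp: continuity_points_def)
  have sL: "s \<in> levels"
    using s pv_inf_le_neg_var[of x] pos_var_le_pv_sup[of x] by (auto simp: levels_def)
  obtain x0 x1 where x0: "pos_var x0 < s" and x1: "s \<le> neg_var x1"
    using levels_crossed[OF sL] by blast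
  have "quantile pos_var s < x" using quantile_less_of_isCont[OF mono_pos_var x0 cont(1)] s by simp
  moreover have "x < quantile neg_var s" using less_quantile_of_isCont[OF mono_neg_var x1 cont(2)] s by simp
  ultimately show "s \<in> covering_levels x" using sL by (simp add: covering_levels_def left_end_def right_end_def)
qed

text \<open>At a continuity point x the covering levels form an interval from neg_var(x)
  to pos_var(x), up to an endpoint, so they have measure p(x).\<close>
lemma covering_levels_measure:
  assumes x: "x \<in> continuity_points"
  shows "emeasure lborel (covering_levels x) = ennreal (p x)"
proof -
  have length: "emeasure lborel {neg_var x<..<pos_var x} = ennreal (p x)"
    "emeasure lborel {neg_var x<..pos_var x} = ennreal (p x)"
    using neg_var_le_pos_var[of x] by (simp_all add: neg_var_def)
  have "ennreal (p x) \<le> emeasure lborel (covering_levels x)"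
    using emeasure_mono[OF covering_levels_supset[OF x], where M=lborel] length(1) by simp
  moreover have "emeasure lborel (covering_levels x) \<le> ennreal (p x)"
    using emeasure_mono[OF covering_levels_subset[of x], where M=lborel] length(2) by simp
  ultimately show ?thesis by (rule antisym[rotated])
qed

section \<open>The mixing measure\<close>

text \<open>The level s carries the weight b(s) - a(s); the mixing measure is the image of
  the weighted levels under s \<mapsto> (a(s), b(s)).\<close>
definition weight :: "real \<Rightarrow> ennreal" where
  "weight s = indicator levels s * ennreal (right_end s - left_end s)"

definition mixing_measure :: "(real \<times> real) measure" where
  "mixing_measure = distr (density lborel weight) borel (\<lambda>s. (left_end s, right_end s))"

lemma weight_measurable [measurable]: "weight \<in> borel_measurable borel"
  unfolding weight_def by measurable

lemma endpoints_measurable: "(\<lambda>s. (left_end s, right_end s)) \<in> density lborel weight \<rightarrow>\<^sub>M borel"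
proof -
  have "density lborel weight \<rightarrow>\<^sub>M borel = lborel \<rightarrow>\<^sub>M (borel :: (real \<times> real) measure)"
    by (rule measurable_cong_sets) auto
  then show ?thesis by simp
qed

lemma sets_mixing_measure: "sets mixing_measure = sets borel"
  by (simp add: mixing_measure_def)

lemma nn_integral_mixing_measure:
  assumes f: "f \<in> borel_measurable borel"
  shows "(\<integral>\<^sup>+z. f z \<partial>mixing_measure) = (\<integral>\<^sup>+s. weight s * f (left_end s, right_end s) \<partial>lborel)"
proof -
  have "(\<integral>\<^sup>+z. f z \<partial>mixing_measure) = (\<integral>\<^sup>+s. f (left_end s, right_end s) \<partial>density lborel weight)"
    unfolding mixing_measure_def by (rule nn_integral_distr[OF endpoints_measurable]) (use f in simp)
  also have "\<dots> = (\<integral>\<^sup>+s. weight s * f (left_end s, right_end s) \<partial>lborel)"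
    by (rule nn_integral_density) (use f in simp_all)
  finally show ?thesis .
qed

text \<open>The total weight is \<integral> p = 1: integrate the indicator of
  {(s, x). a(s) < x < b(s)} first in x, then in s (Fubini).\<close>
lemma total_weight: "(\<integral>\<^sup>+s. weight s \<partial>lborel) = 1"
proof -
  define F where "F z = (indicator {(s, x). s \<in> covering_levels x} z :: ennreal)" for z :: "real \<times> real"
  have F_meas: "F \<in> borel_measurable (lborel \<Otimes>\<^sub>M lborel)"
    unfolding F_def covering_levels_def by measurable
  have sections_s: "(\<integral>\<^sup>+x. F (s, x) \<partial>lborel) = weight s" for s
  proof -
    have "(\<integral>\<^sup>+x. F (s, x) \<partial>lborel) = (\<integral>\<^sup>+x. indicator levels s * indicator {left_end s<..<right_end s} x \<partial>lborel)"
      by (rule nn_integral_cong) (auto simp: F_def covering_levels_def indicator_def)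
    also have "\<dots> = weight s"
      by (cases "left_end s < right_end s") (auto simp: weight_def ennreal_neg nn_integral_cmult_indicator)
    finally show ?thesis .
  qed
  have sections_x: "(\<integral>\<^sup>+s. F (s, x) \<partial>lborel) = ennreal (p x)" if "x \<in> continuity_points" for x
  proof -
    have "(\<integral>\<^sup>+s. F (s, x) \<partial>lborel) = (\<integral>\<^sup>+s. indicator (covering_levels x) s \<partial>lborel)"
      by (rule nn_integral_cong) (auto simp: F_def indicator_def)
    also have "\<dots> = ennreal (p x)" using covering_levels_measure[OF that] by simp
    finally show ?thesis .
  qed
  have "AE x in lborel. x \<in> continuity_points"
    by (rule AE_I'[OF countable_imp_null_set_lborel[OF countable_discontinuities]]) auto
  then have "(\<integral>\<^sup>+x. \<integral>\<^sup>+s. F (s, x) \<partial>lborel \<partial>lborel) = (\<integral>\<^sup>+x. ennreal (p x) \<partial>lborel)"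
    by (intro nn_integral_cong_AE) (auto simp: sections_x)
  moreover have "(\<integral>\<^sup>+s. \<integral>\<^sup>+x. F (s, x) \<partial>lborel \<partial>lborel) = (\<integral>\<^sup>+x. \<integral>\<^sup>+s. F (s, x) \<partial>lborel \<partial>lborel)"
    by (rule lborel_pair.Fubini') (use F_meas in simp)
  ultimately show ?thesis using total by (simp add: sections_s)
qed

lemma prob_space_mixing_measure: "prob_space mixing_measure"
proof (rule prob_spaceI)
  have "emeasure mixing_measure (space mixing_measure) = emeasure (density lborel weight) UNIV"
    unfolding mixing_measure_def by (subst emeasure_distr[OF endpoints_measurable]) auto
  also have "\<dots> = 1" using total_weight by (simp add: emeasure_density)
  finally show "emeasure mixing_measure (space mixing_measure) = 1" .
qed

lemma AE_mixing_measure_ordered: "AE z in mixing_measure. fst z < snd z"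
proof -
  have "AE s in density lborel weight. fst (left_end s, right_end s) < snd (left_end s, right_end s)"
    by (subst AE_density) (auto simp: weight_def indicator_def intro!: AE_I2)
  moreover have "{z \<in> space borel. fst z < snd (z :: real \<times> real)} \<in> sets borel"
  proof -
    have "{z \<in> space (borel \<Otimes>\<^sub>M borel). fst z < snd (z :: real \<times> real)} \<in> sets (borel \<Otimes>\<^sub>M borel)"
      by measurable
    then show ?thesis unfolding borel_prod .
  qed
  ultimately show ?thesis
    unfolding mixing_measure_def by (subst AE_distr_iff[OF endpoints_measurable]) simp_all
qed

lemma mixture_represents_density:
  assumes x: "x \<in> continuity_points"
  shows "ennreal (p x) = (\<integral>\<^sup>+z. ennreal (unif_dens (fst z) (snd z) x) \<partial>mixing_measure)"
proof -
  have "weight s * ennreal (unif_dens (left_end s) (right_end s) x) = indicator (covering_levels x) s" for s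
  proof (cases "s \<in> covering_levels x")
    case True
    then have "right_end s - left_end s > 0" by (simp add: covering_levels_def)
    with True show ?thesis
      by (simp add: covering_levels_def weight_def unif_dens_def ennreal_mult_inverse)
  next
    case False
    then show ?thesis by (auto simp: covering_levels_def weight_def unif_dens_def indicator_def)
  qed
  then have "(\<integral>\<^sup>+z. ennreal (unif_dens (fst z) (snd z) x) \<partial>mixing_measure) = (\<integral>\<^sup>+s. indicator (covering_levels x) s \<partial>lborel)"
    using unif_dens_measurable by (simp add: nn_integral_mixing_measure)
  also have "\<dots> = ennreal (p x)" using covering_levels_measure[OF x] by simp
  finally show ?thesis by simp
qed

lemma inverse_length_integral_le: "(\<integral>\<^sup>+z. ennreal (1 / (snd z - fst z)) \<partial>mixing_measure) \<le> ennreal (pv_sup - pv_inf)"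
proof -
  have pointwise: "weight s * ennreal (1 / (right_end s - left_end s)) \<le> indicator levels s" for s
  proof (cases "s \<in> levels \<and> left_end s < right_end s")
    case True
    then show ?thesis by (simp add: weight_def ennreal_mult_inverse)
  next
    case False
    then show ?thesis by (auto simp: weight_def indicator_def ennreal_neg)
  qed
  have "(\<integral>\<^sup>+z. ennreal (1 / (snd z - fst z)) \<partial>mixing_measure)
      = (\<integral>\<^sup>+s. weight s * ennreal (1 / (right_end s - left_end s)) \<partial>lborel)"
    using inverse_length_measurable by (simp add: nn_integral_mixing_measure)
  also have "\<dots> \<le> (\<integral>\<^sup>+s. indicator levels s \<partial>lborel)"
    by (intro nn_integral_mono pointwise)
  also have "\<dots> = ennreal (pv_sup - pv_inf)" using pv_inf_le_pv_sup by (simp add: levels_def)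
  finally show ?thesis .
qed

lemma two_inverse_length_integral_le:
  "2 * (\<integral>\<^sup>+z. ennreal (1 / (snd z - fst z)) \<partial>mixing_measure) \<le> total_variation p"
proof -
  have "2 * (\<integral>\<^sup>+z. ennreal (1 / (snd z - fst z)) \<partial>mixing_measure) \<le> ennreal 2 * ennreal (pv_sup - pv_inf)"
    using inverse_length_integral_le by (simp add: mult_left_mono)
  also have "\<dots> = ennreal (2 * (pv_sup - pv_inf))"
    using pv_inf_le_pv_sup ennreal_mult[of 2 "pv_sup - pv_inf"] by simp
  also have "\<dots> \<le> ennreal TV"
    using two_pv_sup_le_TV pv_inf_nonneg by (intro ennreal_leI) simp
  finally show ?thesis by (simp add: total_variation_eq_TV)
qed

lemma component_variation_integral_le:
  "(\<integral>\<^sup>+z. total_variation (unif_dens (fst z) (snd z)) \<partial>mixing_measure)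
     \<le> 2 * (\<integral>\<^sup>+z. ennreal (1 / (snd z - fst z)) \<partial>mixing_measure)"
proof -
  have "AE z in mixing_measure. total_variation (unif_dens (fst z) (snd z)) \<le> 2 * ennreal (1 / (snd z - fst z))"
    using AE_mixing_measure_ordered
  proof (rule AE_mp, intro AE_I2 impI)
    fix z :: "real \<times> real" assume z: "fst z < snd z"
    have "total_variation (unif_dens (fst z) (snd z)) \<le> ennreal (2 * (1 / (snd z - fst z)))"
      using total_variation_unif_dens_le[OF z] by simp
    also have "\<dots> = 2 * ennreal (1 / (snd z - fst z))"
      using z ennreal_mult[of 2 "1 / (snd z - fst z)"] by simp
    finally show "total_variation (unif_dens (fst z) (snd z)) \<le> 2 * ennreal (1 / (snd z - fst z))" .
  qed
  then have "(\<integral>\<^sup>+z. total_variation (unif_dens (fst z) (snd z)) \<partial>mixing_measure)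
      \<le> (\<integral>\<^sup>+z. 2 * ennreal (1 / (snd z - fst z)) \<partial>mixing_measure)"
    by (rule nn_integral_mono_AE)
  also have "\<dots> = 2 * (\<integral>\<^sup>+z. ennreal (1 / (snd z - fst z)) \<partial>mixing_measure)"
    using inverse_length_measurable
    by (intro nn_integral_cmult) (simp add: measurable_cong_sets[OF sets_mixing_measure refl])
  finally show ?thesis .
qed

end


text \<open>The mixing measure of the locale works: the representation holds off the countable
  set of discontinuities, and the three total variation bounds close up into equalities.\<close>

theorem lemma4p3:
  fixes p :: "real \<Rightarrow> real"
  assumes meas: "p \<in> borel_measurable borel"
    and nonneg: "\<And>x. p x \<ge> 0"
    and total: "(\<integral>\<^sup>+ x. ennreal (p x) \<partial>lborel) = 1"
    and norm: "tv_normalized p"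
    and bv: "total_variation p < \<infinity>"
  shows "\<exists>\<pi> :: (real \<times> real) measure.
           sets \<pi> = sets borel \<and> prob_space \<pi> \<and>
           (AE z in \<pi>. fst z < snd z) \<and>
           (AE x in lborel. ennreal (p x) =
              (\<integral>\<^sup>+ z. ennreal (unif_dens (fst z) (snd z) x) \<partial>\<pi>)) \<and>
           total_variation p = (\<integral>\<^sup>+ z. total_variation (unif_dens (fst z) (snd z)) \<partial>\<pi>) \<and>
           total_variation p = 2 * (\<integral>\<^sup>+ z. ennreal (1 / (snd z - fst z)) \<partial>\<pi>)"
proof -
  interpret bv_density p using nonneg total bv by unfold_locales
  have lower: "total_variation p \<le> (\<integral>\<^sup>+z. total_variation (unif_dens (fst z) (snd z)) \<partial>mixing_measure)"
    using unif_dens_measurable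
    by (intro total_variation_le_mixture[OF _ unif_dens_nonneg nonneg mixture_represents_density
          countable_discontinuities norm]) (simp add: measurable_cong_sets[OF sets_mixing_measure refl])
  have represented: "AE x in lborel. ennreal (p x) = (\<integral>\<^sup>+z. ennreal (unif_dens (fst z) (snd z) x) \<partial>mixing_measure)"
    by (rule AE_I'[OF countable_imp_null_set_lborel[OF countable_discontinuities]])
      (auto intro: mixture_represents_density)
  show ?thesis
    using sets_mixing_measure prob_space_mixing_measure AE_mixing_measure_ordered represented
      lower component_variation_integral_le two_inverse_length_integral_le
    by (intro exI[of _ mixing_measure]) (auto intro: antisym order_trans)
qed

end
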